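(* Let $\tau_1,\tau_c,\tau_s>0$ with $\tau_1+\tau_c+\tau_s=1$ and $1\gg\tau_c/\tau_1>\tau_s/\tau_1>0$. Let $$\eta_uA^{(u)}=\begin{bmatrix}a&2\tau_1\tau_s&2\tau_1\tau_c&2\tau_c\tau_s&0&0\\2\tau_1\tau_s&a&2\tau_c\tau_s&2\tau_1\tau_c&0&0\\2\tau_1\tau_c&2\tau_c\tau_s&a&2\tau_1\tau_s&0&0\\2\tau_c\tau_s&2\tau_1\tau_c&2\tau_1\tau_s&a&0&0\\0&0&0&0&2\tau_1^2&2\tau_1^2\\0&0&0&0&2\tau_1^2&2\tau_1^2\end{bmatrix},\quad a=\tau_1^2+\tau_s^2+\tau_c^2,$$ let $D^{(u)}$ be the diagonal matrix of row sums of $\eta_uA^{(u)}$, and let $\lambda_1^{(u)}\ge\lambda_2^{(u)}\ge\lambda_3^{(u)}$ be the three largest eigenvalues of $D^{(u)-1/2}(\eta_uA^{(u)})D^{(u)-1/2}$ with eigenvectors $v_1^{(u)},v_2^{(u)},v_3^{(u)}$. Set $\hat\lambda_1^{(u)}=1,\ \hat\lambda_2^{(u)}=1,\ \hat\lambda_3^{(u)}=1-4\frac{\tau_s}{\tau_1}$ and $\hat v_1^{(u)}=[0,0,0,0,1,1]$, $\hat v_2^{(u)}=[1,1,1,1,0,0]$, $\hat v_3^{(u)}=[1,-1,1,-1,0,0]$. Then for $i\in\{1,2,3\}$, $|\lambda_i^{(u)}-\hat\lambda_i^{(u)}|\le O((\tau_c/\tau_1)^2)$, and $\|\sin(U^{(u)},\hat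 U^{(u)})\|_F\le O\big(\frac{\tau_c^2}{\tau_1(\tau_c-\tau_s)}\big)$, where $U^{(u)}=[v_1^{(u)},v_2^{(u)},v_3^{(u)}]$ and $\hat U^{(u)}=[\hat v_1^{(u)},\hat v_2^{(u)},\hat v_3^{(u)}]$.
   Context: $\sin(U,\hat U)$ denotes the matrix of sines of the principal angles between the column spaces of $U$ and $\hat U$ (subspace distance between matrices with orthonormalized columns). The $O(\cdot)$ bounds refer to the regime $\tau_c/\tau_1\to0$. *)

theory Defs
  imports "HOL-Analysis.Analysis"
begin

definition etaA :: "real \<Rightarrow> real \<Rightarrow> real \<Rightarrow> real^6^6" where
  "etaA t1 tc ts = (let a = t1^2 + ts^2 + tc^2 in
     vector [vector [a, 2*t1*ts, 2*t1*tc, 2*tc*ts, 0, 0],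
             vector [2*t1*ts, a, 2*tc*ts, 2*t1*tc, 0, 0],
             vector [2*t1*tc, 2*tc*ts, a, 2*t1*ts, 0, 0],
             vector [2*tc*ts, 2*t1*tc, 2*t1*ts, a, 0, 0],
             vector [0, 0, 0, 0, 2*t1^2, 2*t1^2],
             vector [0, 0, 0, 0, 2*t1^2, 2*t1^2]])"

definition diag_mat :: "real^'n \<Rightarrow> real^'n^'n" where
  "diag_mat d = (\<chi> i j. if i = j then d $ i else 0)"

definition norm_adj :: "real^'n^'n \<Rightarrow> real^'n^'n" where
  "norm_adj M = (let Dm = diag_mat (\<chi> i. 1 / sqrt (\<Sum>j\<in>UNIV. M $ i $ j)) in Dm ** M ** Dm)"

text \<open>Frobenius norm of sin(U, Uhat), where U has orthonormal columns us (a list of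
  vectors) and Uhat has columns uhs: the matrix of sines of principal angles is
  (I - P) U with P the orthogonal projector onto the column space of Uhat;
  its Frobenius norm is sqrt (sum_j |u_j - P u_j|^2).\<close>
definition sin_theta_fro :: "('a::euclidean_space) list \<Rightarrow> 'a list \<Rightarrow> real" where
  "sin_theta_fro us uhs =
     sqrt (\<Sum>u\<leftarrow>us. (norm (u - closest_point (span (set uhs)) u))^2)"

end

theory Submission
  imports Defs
begin

(*
  Row sums of etaA are (t1 + tc + ts)^2 = 1 on the first four rows and 4 t1^2 on the last two,
  so the normalised matrix is block diagonal: the 4 x 4 block of etaA, which commutes with the
  Klein four-group permuting the indices, and the 2 x 2 block with all entries 1/2.  Its
  eigenvectors are the characters of the Klein group and (1, +-1) on the last two coordinates,
  with eigenvalues 1, 1, (t1 + tc - ts)^2, (t1 + ts - tc)^2, (t1 - ts - tc)^2, 0, which are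
  strictly decreasing once tc < t1 / 2.  Eigenvectors of a symmetric matrix for different
  eigenvalues are orthogonal, so comparing an arbitrary sorted orthonormal eigenbasis with this
  one pins down its first three eigenvalues as 1, 1, (1 - 2 ts)^2 and puts v 1, v 2, v 3 into
  the span of vhat: the sine distance is exactly 0, and the eigenvalue error is
  (1 - 2 ts)^2 - (1 - 4 ts / t1) = 4 ts (tc + ts) / t1 + 4 ts^2 <= 12 (tc / t1)^2.
*)

lemma symmetric_eigenvectors_orthogonal:
  fixes M :: "real^'n^'n"
  assumes "transpose M = M" "M *v w = \<mu> *\<^sub>R w" "M *v x = l *\<^sub>R x" "l \<noteq> \<mu>"
  shows "w \<bullet> x = 0"
proof -
  have "l * (w \<bullet> x) = w \<bullet> (M *v x)"
    using assms(3) by simp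
  also have "\<dots> = (transpose M *v w) \<bullet> x"
    by (simp add: dot_lmul_matrix)
  also have "\<dots> = \<mu> * (w \<bullet> x)"
    using assms(1,2) by simp
  finally show ?thesis
    using assms(4) by simp
qed

locale orthonormal_eigenbasis =
  fixes M :: "real^'n^'n" and I :: "'i set" and v :: "'i \<Rightarrow> real^'n" and lam :: "'i \<Rightarrow> real"
  assumes symmetric: "transpose M = M"
    and orthonormal: "\<And>i j. i \<in> I \<Longrightarrow> j \<in> I \<Longrightarrow> v i \<bullet> v j = (if i = j then 1 else 0)"
    and card_index: "card I = CARD('n)"
    and eigen: "\<And>i. i \<in> I \<Longrightarrow> M *v v i = lam i *\<^sub>R v i"

context orthonormal_eigenbasis
begin

lemma finite_index: "finite I"
  using card_index by (simp add: card_ge_0_finite)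

lemma orthogonal_to_basis_eq_0:
  assumes "\<And>i. i \<in> I \<Longrightarrow> x \<bullet> v i = 0"
  shows "x = 0"
proof -
  have inj: "inj_on v I"
    by (rule inj_onI) (metis orthonormal zero_neq_one)
  have "pairwise orthogonal (v ` I)"
    by (auto simp: pairwise_def orthogonal_def orthonormal)
  moreover have "0 \<notin> v ` I"
    using orthonormal by fastforce
  ultimately have "independent (v ` I)"
    by (rule pairwise_orthogonal_independent)
  moreover have "card (v ` I) = dim (UNIV :: (real^'n) set)"
    using card_image[OF inj] card_index by simp
  ultimately have "UNIV \<subseteq> span (v ` I)"
    using card_eq_dim[of "v ` I" UNIV] finite_index by simp
  then have "orthogonal x x"
    using assms by (intro orthogonal_to_span[of x]) (auto simp: orthogonal_def)
  then show ?thesis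
    by (simp add: orthogonal_self)
qed

lemma eigenvector_orthogonal_basis_vector:
  assumes "M *v w = \<mu> *\<^sub>R w" "i \<in> I" "lam i \<noteq> \<mu>"
  shows "w \<bullet> v i = 0"
  using symmetric_eigenvectors_orthogonal[OF symmetric assms(1) eigen[OF assms(2)] assms(3)] .

lemma eigenvalue_attained:
  assumes "M *v w = \<mu> *\<^sub>R w" "w \<noteq> 0"
  shows "\<exists>i\<in>I. lam i = \<mu>"
  using orthogonal_to_basis_eq_0 eigenvector_orthogonal_basis_vector[OF assms(1)] assms(2) by blast

lemma eigenvalue_attained_twice:
  assumes "M *v w = \<mu> *\<^sub>R w" "M *v w' = \<mu> *\<^sub>R w'" "w \<noteq> 0" "w' \<noteq> 0" "w \<bullet> w' = 0"
  shows "2 \<le> card {i\<in>I. lam i = \<mu>}"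
proof (rule ccontr)
  assume few: "\<not> ?thesis"
  obtain i0 where i0: "i0 \<in> I" "lam i0 = \<mu>"
    using eigenvalue_attained[OF assms(1,3)] by blast
  have only_i0: "i = i0" if "i \<in> I" "lam i = \<mu>" for i
  proof (rule ccontr)
    assume "i \<noteq> i0"
    moreover have "card {i, i0} \<le> card {i\<in>I. lam i = \<mu>}"
      using that i0 finite_index by (intro card_mono) auto
    ultimately show False
      using few by simp
  qed
  have multiple: "u = (u \<bullet> v i0) *\<^sub>R v i0" if "M *v u = \<mu> *\<^sub>R u" for u
  proof -
    have "(u - (u \<bullet> v i0) *\<^sub>R v i0) \<bullet> v i = 0" if "i \<in> I" for i
    proof (cases "lam i = \<mu>")
      case True
      then show ?thesis
        using only_i0 that i0 orthonormal by (simp add: inner_diff_left)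
    next
      case False
      then show ?thesis
        using eigenvector_orthogonal_basis_vector[OF \<open>M *v u = \<mu> *\<^sub>R u\<close> that]
          orthonormal[OF i0(1) that] that i0 by (auto simp: inner_diff_left)
    qed
    then have "u - (u \<bullet> v i0) *\<^sub>R v i0 = 0"
      by (rule orthogonal_to_basis_eq_0)
    then show ?thesis
      by simp
  qed
  have "w \<bullet> v i0 \<noteq> 0" "w' \<bullet> v i0 \<noteq> 0"
    using multiple[OF assms(1)] multiple[OF assms(2)] assms(3,4) by (metis scale_zero_left)+
  moreover have "w \<bullet> w' = (w \<bullet> v i0) * (w' \<bullet> v i0)"
    using multiple[OF assms(1)] multiple[OF assms(2)] orthonormal[OF i0(1) i0(1)]
    by (metis inner_scaleR_left inner_scaleR_right mult.right_neutral)
  ultimately show False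
    using assms(5) by simp
qed

end

lemma antimono_on_atLeastAtMost_SucI:
  fixes f :: "nat \<Rightarrow> 'a::preorder"
  assumes "\<forall>i\<in>{1..m}. f (Suc i) \<le> f i"
  shows "antimono_on {1..Suc m} f"
proof (rule monotone_onI)
  fix i j assume "i \<in> {1..Suc m}" "j \<in> {1..Suc m}" "i \<le> j"
  from \<open>i \<le> j\<close> \<open>j \<in> {1..Suc m}\<close> show "f j \<le> f i"
  proof (induction j rule: dec_induct)
    case (step j)
    then have "f (Suc j) \<le> f j" "f j \<le> f i"
      using assms \<open>i \<in> {1..Suc m}\<close> by auto
    then show ?case
      by (rule order_trans)
  qed simp
qed

lemma antimono_on_le_of_card_upper_set:
  fixes f :: "nat \<Rightarrow> 'a::linorder"
  assumes "antimono_on {1..n} f" "1 \<le> k" "k \<le> card {i\<in>{1..n}. c \<le> f i}"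
  shows "c \<le> f k"
proof (rule ccontr)
  assume "\<not> c \<le> f k"
  then have "{i\<in>{1..n}. c \<le> f i} \<subseteq> {1..<k}"
    using assms(1,2) by (auto simp: monotone_on_def not_le) (meson atLeastAtMost_iff le_less_trans not_le)
  then have "card {i\<in>{1..n}. c \<le> f i} \<le> k - 1"
    using card_mono[of "{1..<k}"] by fastforce
  then show False
    using assms(2,3) by linarith
qed

lemma antimono_on_less_of_card_lower_set:
  fixes f :: "nat \<Rightarrow> 'a::linorder"
  assumes "antimono_on {1..n} f" "k \<le> n" "n - k < card {i\<in>{1..n}. f i < c}"
  shows "f k < c"
proof (rule ccontr)
  assume "\<not> f k < c"
  then have "{i\<in>{1..n}. f i < c} \<subseteq> {k<..n}"
    using assms(1,2) by (auto simp: monotone_on_def not_less) (meson atLeastAtMost_iff le_less_trans not_le)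
  then have "card {i\<in>{1..n}. f i < c} \<le> n - k"
    using card_mono[of "{k<..n}"] by fastforce
  then show False
    using assms(3) by linarith
qed

lemma sin_theta_fro_eq_0:
  assumes "set us \<subseteq> span (set uhs)"
  shows "sin_theta_fro us uhs = 0"
  using assms unfolding sin_theta_fro_def by (simp add: closest_point_self subsetD cong: map_cong)

lemma exhaust_6:
  fixes x :: 6
  shows "x = 1 \<or> x = 2 \<or> x = 3 \<or> x = 4 \<or> x = 5 \<or> x = 6"
proof (induct x)
  case (of_int z)
  then have "z = 0 \<or> z = 1 \<or> z = 2 \<or> z = 3 \<or> z = 4 \<or> z = 5"
    by fastforce
  then show ?case
    by auto
qed

lemma forall_6: "(\<forall>i::6. P i) \<longleftrightarrow> P 1 \<and> P 2 \<and> P 3 \<and> P 4 \<and> P 5 \<and> P 6"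
  by (metis exhaust_6)

lemma UNIV_6: "UNIV = {1, 2, 3, 4, 5, 6::6}"
  using exhaust_6 by auto

lemma sum_6: "sum f (UNIV::6 set) = f 1 + f 2 + f 3 + f 4 + f 5 + f 6"
  unfolding UNIV_6 by (simp add: ac_simps)

lemma vector_6 [simp]:
  "(vector [x1, x2, x3, x4, x5, x6] :: 'a::zero^6) $ 1 = x1"
  "(vector [x1, x2, x3, x4, x5, x6] :: 'a::zero^6) $ 2 = x2"
  "(vector [x1, x2, x3, x4, x5, x6] :: 'a::zero^6) $ 3 = x3"
  "(vector [x1, x2, x3, x4, x5, x6] :: 'a::zero^6) $ 4 = x4"
  "(vector [x1, x2, x3, x4, x5, x6] :: 'a::zero^6) $ 5 = x5"
  "(vector [x1, x2, x3, x4, x5, x6] :: 'a::zero^6) $ 6 = x6"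
  unfolding vector_def by simp_all

lemma inner_vec_6:
  "(x::real^6) \<bullet> y = x$1 * y$1 + x$2 * y$2 + x$3 * y$3 + x$4 * y$4 + x$5 * y$5 + x$6 * y$6"
  by (simp add: inner_vec_def sum_6)

lemma transpose_diag_mat [simp]: "transpose (diag_mat d) = diag_mat d"
  by (simp add: transpose_def diag_mat_def vec_eq_iff)

lemma diag_mat_mult_mult_diag_mat:
  "diag_mat d ** A ** diag_mat d = (\<chi> i j. d$i * A$i$j * d$j)"
  unfolding diag_mat_def matrix_matrix_mult_def
  by (simp add: vec_eq_iff mult.assoc if_distrib[where f="\<lambda>x. x * _"]
      if_distrib[where f="\<lambda>x. _ * x"] cong: if_cong)

lemma norm_adj_symmetric:
  assumes "transpose M = M"
  shows "transpose (norm_adj M) = norm_adj M"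
  using assms by (simp add: norm_adj_def Let_def matrix_transpose_mul matrix_mul_assoc)

lemma etaA_symmetric: "transpose (etaA t1 tc ts) = etaA t1 tc ts"
  by (simp add: transpose_def etaA_def Let_def vec_eq_iff forall_6 mult.commute)

lemma etaA_inv_sqrt_row_sums:
  assumes "t1 > 0" "t1 + tc + ts = 1"
  shows "(\<chi> i. 1 / sqrt (\<Sum>j\<in>UNIV. etaA t1 tc ts $ i $ j))
       = (vector [1, 1, 1, 1, 1 / (2*t1), 1 / (2*t1)] :: real^6)"
proof -
  have "t1^2 + ts^2 + tc^2 + 2*t1*ts + 2*t1*tc + 2*tc*ts = (t1 + tc + ts)^2"
    by (simp add: power2_eq_square algebra_simps)
  then have block_sum: "t1^2 + ts^2 + tc^2 + 2*t1*ts + 2*t1*tc + 2*tc*ts = 1"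
    using assms(2) by simp
  have "sqrt (2*t1^2 + 2*t1^2) = 2*t1"
    using assms(1) by (simp add: real_sqrt_mult)
  with block_sum show ?thesis
    by (simp add: vec_eq_iff forall_6 etaA_def Let_def sum_6 algebra_simps)
qed

lemma norm_adj_etaA_mult:
  assumes "t1 > 0" "t1 + tc + ts = 1"
  shows "norm_adj (etaA t1 tc ts) *v x = vector [
    (t1^2 + ts^2 + tc^2) * x$1 + 2*t1*ts * x$2 + 2*t1*tc * x$3 + 2*tc*ts * x$4,
    2*t1*ts * x$1 + (t1^2 + ts^2 + tc^2) * x$2 + 2*tc*ts * x$3 + 2*t1*tc * x$4,
    2*t1*tc * x$1 + 2*tc*ts * x$2 + (t1^2 + ts^2 + tc^2) * x$3 + 2*t1*ts * x$4,
    2*tc*ts * x$1 + 2*t1*tc * x$2 + 2*t1*ts * x$3 + (t1^2 + ts^2 + tc^2) * x$4,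
    x$5 / 2 + x$6 / 2,
    x$5 / 2 + x$6 / 2]"
proof -
  have "1 / (2*t1) * (2 * t1^2) * (1 / (2*t1)) = 1 / 2"
    using assms(1) by (simp add: power2_eq_square field_simps)
  then show ?thesis
    unfolding norm_adj_def Let_def etaA_inv_sqrt_row_sums[OF assms] diag_mat_mult_mult_diag_mat
    using assms(1)
    by (simp add: vec_eq_iff forall_6 matrix_vector_mult_def sum_6 etaA_def Let_def algebra_simps
        power2_eq_square)
qed

lemma norm_adj_etaA_eigenvectors:
  assumes "t1 > 0" "t1 + tc + ts = 1"
  shows "norm_adj (etaA t1 tc ts) *v vector [0,0,0,0,1,1] = 1 *\<^sub>R vector [0,0,0,0,1,1]"
    and "norm_adj (etaA t1 tc ts) *v vector [1,1,1,1,0,0] = 1 *\<^sub>R vector [1,1,1,1,0,0]"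
    and "norm_adj (etaA t1 tc ts) *v vector [1,-1,1,-1,0,0]
           = (t1 + tc - ts)^2 *\<^sub>R vector [1,-1,1,-1,0,0]"
    and "norm_adj (etaA t1 tc ts) *v vector [1,1,-1,-1,0,0]
           = (t1 + ts - tc)^2 *\<^sub>R vector [1,1,-1,-1,0,0]"
    and "norm_adj (etaA t1 tc ts) *v vector [1,-1,-1,1,0,0]
           = (t1 - ts - tc)^2 *\<^sub>R vector [1,-1,-1,1,0,0]"
    and "norm_adj (etaA t1 tc ts) *v vector [0,0,0,0,1,-1] = 0 *\<^sub>R vector [0,0,0,0,1,-1]"
proof -
  have "t1^2 + ts^2 + tc^2 + 2*t1*ts + 2*t1*tc + 2*tc*ts = (t1 + tc + ts)^2"
    by (simp add: power2_eq_square algebra_simps)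
  then have block_sum: "t1^2 + ts^2 + tc^2 = 1 - 2*t1*ts - 2*t1*tc - 2*tc*ts"
    using assms(2) by simp
  note mult = norm_adj_etaA_mult[OF assms]
  show "norm_adj (etaA t1 tc ts) *v vector [0,0,0,0,1,1] = 1 *\<^sub>R vector [0,0,0,0,1,1]"
       "norm_adj (etaA t1 tc ts) *v vector [0,0,0,0,1,-1] = 0 *\<^sub>R vector [0,0,0,0,1,-1]"
    unfolding mult by (simp_all add: vec_eq_iff forall_6)
  show "norm_adj (etaA t1 tc ts) *v vector [1,1,1,1,0,0] = 1 *\<^sub>R vector [1,1,1,1,0,0]"
    unfolding mult block_sum by (simp add: vec_eq_iff forall_6)
  show "norm_adj (etaA t1 tc ts) *v vector [1,-1,1,-1,0,0]
          = (t1 + tc - ts)^2 *\<^sub>R vector [1,-1,1,-1,0,0]"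
       "norm_adj (etaA t1 tc ts) *v vector [1,1,-1,-1,0,0]
          = (t1 + ts - tc)^2 *\<^sub>R vector [1,1,-1,-1,0,0]"
       "norm_adj (etaA t1 tc ts) *v vector [1,-1,-1,1,0,0]
          = (t1 - ts - tc)^2 *\<^sub>R vector [1,-1,-1,1,0,0]"
    unfolding mult by (simp_all add: vec_eq_iff forall_6 power2_eq_square algebra_simps)
qed

lemma orthogonal_etaA_eigenvectors_eq_0:
  fixes x :: "real^6"
  assumes "vector [0,0,0,0,1,1] \<bullet> x = 0" "vector [1,1,1,1,0,0] \<bullet> x = 0"
    "vector [1,-1,1,-1,0,0] \<bullet> x = 0" "vector [1,1,-1,-1,0,0] \<bullet> x = 0"
    "vector [1,-1,-1,1,0,0] \<bullet> x = 0" "vector [0,0,0,0,1,-1] \<bullet> x = 0"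
  shows "x = 0"
  using assms by (simp add: vec_eq_iff forall_6 inner_vec_6)

lemma orthogonal_etaA_lower_eigenvectors_imp_span:
  fixes x :: "real^6"
  assumes "vector [1,1,-1,-1,0,0] \<bullet> x = 0" "vector [1,-1,-1,1,0,0] \<bullet> x = 0"
    "vector [0,0,0,0,1,-1] \<bullet> x = 0"
  shows "x \<in> span {vector [0,0,0,0,1,1], vector [1,1,1,1,0,0], vector [1,-1,1,-1,0,0]}"
proof -
  have "x = x$5 *\<^sub>R vector [0,0,0,0,1,1] + ((x$1 + x$2) / 2) *\<^sub>R vector [1,1,1,1,0,0]
          + ((x$1 - x$2) / 2) *\<^sub>R vector [1,-1,1,-1,0,0]"
    using assms by (simp add: vec_eq_iff forall_6 inner_vec_6 field_simps)
  also have "\<dots> \<in> span {vector [0,0,0,0,1,1], vector [1,1,1,1,0,0], vector [1,-1,1,-1,0,0]}"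
    by (intro span_add span_scale span_base) simp_all
  finally show ?thesis .
qed

lemma etaA_eigenvalues_strict_order:
  fixes t1 tc ts :: real
  assumes "tc > 0" "ts > 0" "t1 + tc + ts = 1" "ts < tc" "tc < t1 / 2"
  shows "0 < (t1 - ts - tc)^2" "(t1 - ts - tc)^2 < (t1 + ts - tc)^2"
    "(t1 + ts - tc)^2 < (t1 + tc - ts)^2" "(t1 + tc - ts)^2 < 1"
  using assms by (auto intro!: power_strict_mono simp: power_less_one_iff abs_less_iff)

lemma etaA_third_eigenvalue_error:
  fixes t1 tc ts :: real
  assumes "t1 > 0" "tc > 0" "ts > 0" "t1 + tc + ts = 1" "ts < tc"
  shows "\<bar>(t1 + tc - ts)^2 - (1 - 4 * (ts / t1))\<bar> \<le> 12 * (tc / t1)^2"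
proof -
  have error_eq: "(t1 + tc - ts)^2 - (1 - 4 * (ts / t1)) = 4 * ts * (tc + ts) / t1 + 4 * ts^2"
  proof -
    have "t1 + tc - ts = 1 - 2 * ts" "tc + ts = 1 - t1"
      using assms(4) by linarith+
    then have "(t1 + tc - ts)^2 = (1 - 2 * ts)^2"
      and "4 * ts * (tc + ts) / t1 = 4 * ts * (1 - t1) / t1"
      by (simp_all only:)
    moreover have "(1 - 2 * ts)^2 = 1 - 4 * ts + 4 * ts^2"
      by (simp add: power2_eq_square algebra_simps)
    moreover have "4 * ts * (1 - t1) / t1 = 4 * (ts / t1) - 4 * ts"
      using assms(1) by (simp add: field_simps)
    ultimately show ?thesis
      by linarith
  qed
  have "\<bar>(t1 + tc - ts)^2 - (1 - 4 * (ts / t1))\<bar> = 4 * ts * (tc + ts) / t1 + 4 * ts^2"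
    unfolding error_eq using assms by simp
  also have "\<dots> \<le> 8 * tc^2 / t1^2 + 4 * tc^2 / t1^2"
  proof (rule add_mono)
    have "t1^2 \<le> t1"
      using assms by (simp add: power2_eq_square mult_left_le)
    have "ts * tc \<le> tc * tc" "ts * ts \<le> tc * tc"
      using assms by (simp_all add: mult_mono)
    then have "4 * ts * (tc + ts) \<le> 8 * tc^2"
      by (simp add: power2_eq_square algebra_simps)
    then have "4 * ts * (tc + ts) / t1 \<le> 8 * tc^2 / t1"
      using assms(1) by (simp add: divide_right_mono)
    also have "\<dots> \<le> 8 * tc^2 / t1^2"
      using \<open>t1^2 \<le> t1\<close> assms(1) by (intro divide_left_mono) auto
    finally show "4 * ts * (tc + ts) / t1 \<le> 8 * tc^2 / t1^2" .
    have "ts^2 \<le> tc^2"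
      using assms by (simp add: power_mono)
    also have "\<dots> \<le> tc^2 / t1^2"
      using \<open>t1^2 \<le> t1\<close> assms by (simp add: le_divide_eq mult_left_le)
    finally show "4 * ts^2 \<le> 4 * tc^2 / t1^2"
      by simp
  qed
  also have "\<dots> = 12 * (tc / t1)^2"
    by (simp add: power_divide)
  finally show ?thesis .
qed

lemma etaA_eigenbasis_spectrum:
  fixes v :: "nat \<Rightarrow> real^6"
  assumes "t1 > 0" "t1 + tc + ts = 1"
    and basis: "orthonormal_eigenbasis (norm_adj (etaA t1 tc ts)) I v lam"
    and "i \<in> I"
  shows "lam i \<in> {1, (t1 + tc - ts)^2, (t1 + ts - tc)^2, (t1 - ts - tc)^2, 0}"
proof (rule ccontr)
  interpret orthonormal_eigenbasis "norm_adj (etaA t1 tc ts)" I v lam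
    by (rule basis)
  assume "lam i \<notin> {1, (t1 + tc - ts)^2, (t1 + ts - tc)^2, (t1 - ts - tc)^2, 0}"
  then have "v i = 0"
    using eigenvector_orthogonal_basis_vector[OF norm_adj_etaA_eigenvectors(1) \<open>i \<in> I\<close>]
      eigenvector_orthogonal_basis_vector[OF norm_adj_etaA_eigenvectors(2) \<open>i \<in> I\<close>]
      eigenvector_orthogonal_basis_vector[OF norm_adj_etaA_eigenvectors(3) \<open>i \<in> I\<close>]
      eigenvector_orthogonal_basis_vector[OF norm_adj_etaA_eigenvectors(4) \<open>i \<in> I\<close>]
      eigenvector_orthogonal_basis_vector[OF norm_adj_etaA_eigenvectors(5) \<open>i \<in> I\<close>]
      eigenvector_orthogonal_basis_vector[OF norm_adj_etaA_eigenvectors(6) \<open>i \<in> I\<close>]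
      assms(1,2) by (intro orthogonal_etaA_eigenvectors_eq_0) auto
  then show False
    using orthonormal[OF \<open>i \<in> I\<close> \<open>i \<in> I\<close>] by simp
qed

lemma etaA_leading_eigenvalues:
  fixes v :: "nat \<Rightarrow> real^6"
  assumes params: "t1 > 0" "tc > 0" "ts > 0" "t1 + tc + ts = 1" "ts < tc" "tc < t1 / 2"
    and basis: "orthonormal_eigenbasis (norm_adj (etaA t1 tc ts)) {1..6} v lam"
    and sorted: "antimono_on {1..6} lam"
  shows "lam 1 = 1" "lam 2 = 1" "lam 3 = (t1 + tc - ts)^2"
proof -
  interpret orthonormal_eigenbasis "norm_adj (etaA t1 tc ts)" "{1..6}" v lam
    by (rule basis)
  define \<mu>3 \<mu>4 \<mu>5 where "\<mu>3 = (t1 + tc - ts)^2" "\<mu>4 = (t1 + ts - tc)^2" "\<mu>5 = (t1 - ts - tc)^2"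
  note eigvecs = norm_adj_etaA_eigenvectors[OF params(1,4), folded \<mu>3_\<mu>4_\<mu>5_def]
  have order: "0 < \<mu>5" "\<mu>5 < \<mu>4" "\<mu>4 < \<mu>3" "\<mu>3 < 1"
    unfolding \<mu>3_\<mu>4_\<mu>5_def using etaA_eigenvalues_strict_order params(2-6) by auto
  have spectrum: "lam i \<in> {1, \<mu>3, \<mu>4, \<mu>5, 0}" if "i \<in> {1..6}" for i
    unfolding \<mu>3_\<mu>4_\<mu>5_def using etaA_eigenbasis_spectrum[OF params(1,4) basis that] .
  have nonzero: "vector [0,0,0,0,1,1] \<noteq> (0::real^6)" "vector [1,1,1,1,0,0] \<noteq> (0::real^6)"
    "vector [1,-1,1,-1,0,0] \<noteq> (0::real^6)" "vector [1,1,-1,-1,0,0] \<noteq> (0::real^6)"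
    "vector [1,-1,-1,1,0,0] \<noteq> (0::real^6)" "vector [0,0,0,0,1,-1] \<noteq> (0::real^6)"
    by (simp_all add: vec_eq_iff forall_6)
  txt \<open>Among the six sorted eigenvalues, 1 occurs at least twice and each of \<mu>3, \<mu>4, \<mu>5, 0
    at least once; counting from either end of the list then fixes the first three.\<close>
  have "2 \<le> card {i\<in>{1..6}. lam i = 1}"
    using eigenvalue_attained_twice[OF eigvecs(1,2) nonzero(1,2)] by (simp add: inner_vec_6)
  obtain i3 i4 i5 i6 where attained: "i3 \<in> {1..6}" "lam i3 = \<mu>3" "i4 \<in> {1..6}" "lam i4 = \<mu>4"
    "i5 \<in> {1..6}" "lam i5 = \<mu>5" "i6 \<in> {1..6}" "lam i6 = 0"
    using eigenvalue_attained[OF eigvecs(3) nonzero(3)] eigenvalue_attained[OF eigvecs(4) nonzero(4)]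
      eigenvalue_attained[OF eigvecs(5) nonzero(5)] eigenvalue_attained[OF eigvecs(6) nonzero(6)]
    by blast
  have "card {i\<in>{1..6}. lam i = 1} \<le> card {i\<in>{1..6::nat}. 1 \<le> lam i}"
    by (rule card_mono) auto
  then have "1 \<le> lam 2"
    using \<open>2 \<le> card _\<close> by (intro antimono_on_le_of_card_upper_set[OF sorted]) auto
  moreover have "lam 2 \<le> lam 1" "lam 1 \<le> 1" "lam 2 \<le> 1"
    using sorted spectrum[of 1] spectrum[of 2] order by (auto simp: monotone_on_def)
  ultimately show "lam 1 = 1" "lam 2 = 1"
    by auto
  have "card (insert i3 {i\<in>{1..6}. lam i = 1}) \<le> card {i\<in>{1..6::nat}. \<mu>3 \<le> lam i}"
    using attained order by (intro card_mono) auto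
  then have "\<mu>3 \<le> lam 3"
    using \<open>2 \<le> card _\<close> attained order
    by (intro antimono_on_le_of_card_upper_set[OF sorted]) auto
  moreover have "lam 3 < 1"
  proof (rule antimono_on_less_of_card_lower_set[OF sorted])
    have "i3 \<notin> {i4, i5, i6}" "i4 \<notin> {i5, i6}" "i5 \<noteq> i6"
      using attained order by auto
    then have "card {i3, i4, i5, i6} = 4"
      by simp
    moreover have "card {i3, i4, i5, i6} \<le> card {i\<in>{1..6::nat}. lam i < 1}"
      using attained order by (intro card_mono) auto
    ultimately show "6 - 3 < card {i\<in>{1..6::nat}. lam i < 1}"
      by simp
  qed simp
  ultimately show "lam 3 = (t1 + tc - ts)^2"
    using spectrum[of 3] order unfolding \<mu>3_\<mu>4_\<mu>5_def by auto
qed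

lemma etaA_leading_eigenvectors_span:
  fixes v :: "nat \<Rightarrow> real^6"
  assumes params: "t1 > 0" "tc > 0" "ts > 0" "t1 + tc + ts = 1" "ts < tc" "tc < t1 / 2"
    and basis: "orthonormal_eigenbasis (norm_adj (etaA t1 tc ts)) I v lam"
    and "i \<in> I" "lam i \<in> {1, (t1 + tc - ts)^2}"
  shows "v i \<in> span {vector [0,0,0,0,1,1], vector [1,1,1,1,0,0], vector [1,-1,1,-1,0,0]}"
proof -
  interpret orthonormal_eigenbasis "norm_adj (etaA t1 tc ts)" I v lam
    by (rule basis)
  have "lam i \<notin> {(t1 + ts - tc)^2, (t1 - ts - tc)^2, 0}"
    using assms(9) etaA_eigenvalues_strict_order[OF params(2-6)] by auto
  then show ?thesis
    using eigenvector_orthogonal_basis_vector[OF norm_adj_etaA_eigenvectors(4) \<open>i \<in> I\<close>]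
      eigenvector_orthogonal_basis_vector[OF norm_adj_etaA_eigenvectors(5) \<open>i \<in> I\<close>]
      eigenvector_orthogonal_basis_vector[OF norm_adj_etaA_eigenvectors(6) \<open>i \<in> I\<close>]
      params(1,4) by (intro orthogonal_etaA_lower_eigenvectors_imp_span) auto
qed

lemma etaA_leading_eigenpairs_bounds:
  fixes lam :: "nat \<Rightarrow> real" and v :: "nat \<Rightarrow> real^6"
  assumes "t1 > 0" "tc > 0" "ts > 0" "t1 + tc + ts = 1" "ts < tc" "tc / t1 < 1/2"
    and eigen: "\<forall>i\<in>{1..6}. norm_adj (etaA t1 tc ts) *v v i = lam i *\<^sub>R v i"
    and orthonormal: "\<forall>i\<in>{1..6}. \<forall>j\<in>{1..6}. v i \<bullet> v j = (if i = j then 1 else 0)"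
    and sorted: "\<forall>i\<in>{1..5}. lam (Suc i) \<le> lam i"
  shows "\<forall>i\<in>{1..3}. \<bar>lam i - (if i = 3 then 1 - 4 * (ts / t1) else 1)\<bar> \<le> 12 * (tc / t1)^2"
    and "sin_theta_fro [v 1, v 2, v 3]
           [vector [0,0,0,0,1,1], vector [1,1,1,1,0,0], vector [1,-1,1,-1,0,0]] = 0"
proof -
  have params: "t1 > 0" "tc > 0" "ts > 0" "t1 + tc + ts = 1" "ts < tc" "tc < t1 / 2"
    using assms(1-6) by (simp_all add: divide_less_eq)
  have basis: "orthonormal_eigenbasis (norm_adj (etaA t1 tc ts)) {1..6} v lam"
    using eigen orthonormal by unfold_locales (simp_all add: etaA_symmetric norm_adj_symmetric)
  have "antimono_on {1..6} lam"
    using antimono_on_atLeastAtMost_SucI[OF sorted] by simp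
  note lam = etaA_leading_eigenvalues[OF params basis this]
  have "{1..3} = {1, 2, 3::nat}"
    by auto
  then show "\<forall>i\<in>{1..3}. \<bar>lam i - (if i = 3 then 1 - 4 * (ts / t1) else 1)\<bar> \<le> 12 * (tc / t1)^2"
    using lam etaA_third_eigenvalue_error[OF params(1-5)] by simp
  show "sin_theta_fro [v 1, v 2, v 3]
          [vector [0,0,0,0,1,1], vector [1,1,1,1,0,0], vector [1,-1,1,-1,0,0]] = 0"
    using etaA_leading_eigenvectors_span[OF params basis] lam
    by (intro sin_theta_fro_eq_0) auto
qed

theorem theorem7:
  "\<exists>C>0. \<exists>\<delta>>0. \<forall>t1 tc ts :: real.
     t1 > 0 \<and> tc > 0 \<and> ts > 0 \<and> t1 + tc + ts = 1 \<and> ts < tc \<and> tc / t1 < \<delta> \<longrightarrow>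
     (\<forall>(lam :: nat \<Rightarrow> real) (v :: nat \<Rightarrow> real^6).
        (\<forall>i\<in>{1..6}. norm_adj (etaA t1 tc ts) *v v i = lam i *\<^sub>R v i) \<and>
        (\<forall>i\<in>{1..6}. \<forall>j\<in>{1..6}. v i \<bullet> v j = (if i = j then 1 else 0)) \<and>
        (\<forall>i\<in>{1..5}. lam (Suc i) \<le> lam i)
        \<longrightarrow>
        (let lhat = (\<lambda>i::nat. if i = 3 then 1 - 4 * (ts / t1) else 1);
             vhat = [vector [0,0,0,0,1,1], vector [1,1,1,1,0,0], vector [1,-1,1,-1,0,0]]
                      :: (real^6) list
         in (\<forall>i\<in>{1..3}. \<bar>lam i - lhat i\<bar> \<le> C * (tc / t1)^2) \<and>
            sin_theta_fro [v 1, v 2, v 3] vhat \<le> C * (tc^2 / (t1 * (tc - ts)))))"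
proof (rule exI[of _ 12], rule conjI, simp, rule exI[of _ "1/2"], rule conjI, simp,
    intro allI impI, elim conjE)
  fix t1 tc ts :: real and lam :: "nat \<Rightarrow> real" and v :: "nat \<Rightarrow> real^6"
  assume params: "t1 > 0" "tc > 0" "ts > 0" "t1 + tc + ts = 1" "ts < tc" "tc / t1 < 1/2"
    and eigenbasis: "\<forall>i\<in>{1..6}. norm_adj (etaA t1 tc ts) *v v i = lam i *\<^sub>R v i"
      "\<forall>i\<in>{1..6}. \<forall>j\<in>{1..6}. v i \<bullet> v j = (if i = j then 1 else 0)"
      "\<forall>i\<in>{1..5}. lam (Suc i) \<le> lam i"
  note bounds = etaA_leading_eigenpairs_bounds[OF params eigenbasis]
  have "0 \<le> tc^2 / (t1 * (tc - ts))"
    using params by simp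
  with bounds show "let lhat = (\<lambda>i::nat. if i = 3 then 1 - 4 * (ts / t1) else 1);
             vhat = [vector [0,0,0,0,1,1], vector [1,1,1,1,0,0], vector [1,-1,1,-1,0,0]]
                      :: (real^6) list
         in (\<forall>i\<in>{1..3}. \<bar>lam i - lhat i\<bar> \<le> 12 * (tc / t1)^2) \<and>
            sin_theta_fro [v 1, v 2, v 3] vhat \<le> 12 * (tc^2 / (t1 * (tc - ts)))"
    by (simp only: Let_def) simp
qed

end
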